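(* Let $\mathcal{H}$ be a complex Hilbert space. The inclusion map $\mathcal{P}(\mathcal{H})\hookrightarrow\mathcal{P}_{\mathbb{R}}(\mathcal{H})$, $P\mapsto P$, is an injective, completely additive homomorphism of involution lattices which is covariant with respect to the actions $P\mapsto UPU^*$ of the group $\mathrm{AU}(\mathcal{H})$ of all unitary and antiunitary operators on $\mathcal{H}$.
   Context: $\mathcal{P}(\mathcal{H})$ is the lattice of (complex linear) orthogonal projections with operator order, orthocomplement $P^\perp=1-P$, minimal/maximal elements $0,1$. $\mathcal{P}_{\mathbb{R}}(\mathcal{H})$ is the set of real orthogonal projections on $\mathcal{H}$ (real linear, selfadjoint with respect to $\mathrm{Re}\langle\cdot,\cdot\rangle$, idempotent), i.e. projections onto closed real linear subspaces; it is ordered by $E\le F\iff E\mathcal{H}\subset F\mathcal{H}$, has $0,1$, join = projection onto the closed real span, meet = projection onto the intersection, and involution $E'=1+iEi$ (the projection onto the symplectic complement $\{\xi:\mathrm{Im}\langle\xi,h\rangle=0\ \forall h\in E\mathcal{H}\}$). An involution lattice is a $\sigma$-complete bounded lattice with an order-reversing involution (not necessarily a complement); a homomorphism of involution lattices preserves $0$, $1$, the involution, and binary joins and meets. A map is completely additive if it maps the join of any (arbitrary) family of pairwise separated elements ($A\le B^{\text{involution}}$ for distinct $A,B$) to the join of the images. *)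

theory Defs
  imports "HOL-Analysis.Analysis"
begin

text \<open>A complex Hilbert space is modelled as a real Hilbert space
  (type class real_inner + complete_space, inner = Re of the complex inner product)
  together with an orthogonal complex structure J (multiplication by i).\<close>

definition complex_structure :: "('a::real_inner \<Rightarrow> 'a) \<Rightarrow> bool" where
  "complex_structure J \<longleftrightarrow> linear J \<and> (\<forall>x. J (J x) = - x) \<and>
     (\<forall>x y. inner (J x) (J y) = inner x y)"

text \<open>Complex scalar multiplication and complex inner product (linear in the first argument).\<close>
definition cscale :: "('a::real_vector \<Rightarrow> 'a) \<Rightarrow> complex \<Rightarrow> 'a \<Rightarrow> 'a" where
  "cscale J c x = Re c *\<^sub>R x + Im c *\<^sub>R J x"

definition cinner :: "('a::real_inner \<Rightarrow> 'a) \<Rightarrow> 'a \<Rightarrow> 'a \<Rightarrow> complex" where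
  "cinner J x y = Complex (inner x y) (inner x (J y))"

definition cspan :: "('a::real_vector \<Rightarrow> 'a) \<Rightarrow> 'a set \<Rightarrow> 'a set" where
  "cspan J S = span (S \<union> J ` S)"

definition is_cproj :: "('a::real_inner \<Rightarrow> 'a) \<Rightarrow> ('a \<Rightarrow> 'a) \<Rightarrow> bool" where
  "is_cproj J P \<longleftrightarrow> linear P \<and> (\<forall>c x. P (cscale J c x) = cscale J c (P x)) \<and>
     (\<forall>x y. cinner J (P x) y = cinner J x (P y)) \<and> (\<forall>x. P (P x) = P x)"

definition is_rproj :: "('a::real_inner \<Rightarrow> 'a) \<Rightarrow> bool" where
  "is_rproj E \<longleftrightarrow> linear E \<and> (\<forall>x y. inner (E x) y = inner x (E y)) \<and> (\<forall>x. E (E x) = E x)"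

text \<open>Operator order on P(H): <Px,x> <= <Qx,x> (these are real for selfadjoint operators).\<close>
definition cle :: "('a::real_inner \<Rightarrow> 'a) \<Rightarrow> ('a \<Rightarrow> 'a) \<Rightarrow> ('a \<Rightarrow> 'a) \<Rightarrow> bool" where
  "cle J P Q \<longleftrightarrow> (\<forall>x. Re (cinner J (P x) x) \<le> Re (cinner J (Q x) x))"

definition cperp :: "('a::real_vector \<Rightarrow> 'a) \<Rightarrow> 'a \<Rightarrow> 'a" where
  "cperp P = (\<lambda>x. x - P x)"

definition rinv :: "('a::real_vector \<Rightarrow> 'a) \<Rightarrow> ('a \<Rightarrow> 'a) \<Rightarrow> 'a \<Rightarrow> 'a" where
  "rinv J E = (\<lambda>x. x + J (E (J x)))"

definition cproj_onto :: "('a::real_inner \<Rightarrow> 'a) \<Rightarrow> 'a set \<Rightarrow> 'a \<Rightarrow> 'a" where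
  "cproj_onto J S = (THE P. is_cproj J P \<and> range P = S)"

definition rproj_onto :: "'a::real_inner set \<Rightarrow> 'a \<Rightarrow> 'a" where
  "rproj_onto S = (THE E. is_rproj E \<and> range E = S)"

definition cSup :: "('a::real_inner \<Rightarrow> 'a) \<Rightarrow> ('a \<Rightarrow> 'a) set \<Rightarrow> 'a \<Rightarrow> 'a" where
  "cSup J \<P> = cproj_onto J (closure (cspan J (\<Union>P\<in>\<P>. range P)))"

definition rSup :: "('a::real_inner \<Rightarrow> 'a) set \<Rightarrow> 'a \<Rightarrow> 'a" where
  "rSup \<E> = rproj_onto (closure (span (\<Union>E\<in>\<E>. range E)))"

definition cjoin :: "('a::real_inner \<Rightarrow> 'a) \<Rightarrow> ('a \<Rightarrow> 'a) \<Rightarrow> ('a \<Rightarrow> 'a) \<Rightarrow> 'a \<Rightarrow> 'a" where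
  "cjoin J P Q = cSup J {P, Q}"

definition rjoin :: "('a::real_inner \<Rightarrow> 'a) \<Rightarrow> ('a \<Rightarrow> 'a) \<Rightarrow> 'a \<Rightarrow> 'a" where
  "rjoin E F = rSup {E, F}"

definition cmeet :: "('a::real_inner \<Rightarrow> 'a) \<Rightarrow> ('a \<Rightarrow> 'a) \<Rightarrow> ('a \<Rightarrow> 'a) \<Rightarrow> 'a \<Rightarrow> 'a" where
  "cmeet J P Q = cproj_onto J (range P \<inter> range Q)"

definition rmeet :: "('a::real_inner \<Rightarrow> 'a) \<Rightarrow> ('a \<Rightarrow> 'a) \<Rightarrow> 'a \<Rightarrow> 'a" where
  "rmeet E F = rproj_onto (range E \<inter> range F)"

definition unitary :: "('a::real_inner \<Rightarrow> 'a) \<Rightarrow> ('a \<Rightarrow> 'a) \<Rightarrow> bool" where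
  "unitary J U \<longleftrightarrow> surj U \<and> linear U \<and> (\<forall>c x. U (cscale J c x) = cscale J c (U x)) \<and>
     (\<forall>x y. cinner J (U x) (U y) = cinner J x y)"

definition antiunitary :: "('a::real_inner \<Rightarrow> 'a) \<Rightarrow> ('a \<Rightarrow> 'a) \<Rightarrow> bool" where
  "antiunitary J U \<longleftrightarrow> surj U \<and> linear U \<and> (\<forall>c x. U (cscale J c x) = cscale J (cnj c) (U x)) \<and>
     (\<forall>x y. cinner J (U x) (U y) = cnj (cinner J x y))"

definition AU :: "('a::real_inner \<Rightarrow> 'a) \<Rightarrow> ('a \<Rightarrow> 'a) set" where
  "AU J = {U. unitary J U \<or> antiunitary J U}"

text \<open>The action P \<mapsto> U P U^* (U^* = U^{-1} for (anti)unitary U) on P(H) and on P_R(H).\<close>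
definition cact :: "('a \<Rightarrow> 'a) \<Rightarrow> ('a \<Rightarrow> 'a) \<Rightarrow> 'a \<Rightarrow> 'a" where
  "cact U P = U \<circ> P \<circ> inv U"

definition ract :: "('a \<Rightarrow> 'a) \<Rightarrow> ('a \<Rightarrow> 'a) \<Rightarrow> 'a \<Rightarrow> 'a" where
  "ract U E = U \<circ> E \<circ> inv U"

definition incl :: "('a \<Rightarrow> 'a) \<Rightarrow> 'a \<Rightarrow> 'a" where
  "incl P = P"

end

theory Submission
  imports Defs
begin

text \<open>A complex projection is in particular a real projection. Conversely, a real projection
  whose range is invariant under the complex structure J commutes with J, because J is
  skew-adjoint; so on J-invariant closed subspaces the complex and the real projection coincide.
  Closed complex spans and intersections of ranges of complex projections are J-invariant, hence
  joins (of arbitrary families, separated or not) and meets agree in both lattices, and the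
  involution 1 + JPJ reduces to 1 - P since P commutes with J. Covariance holds because
  conjugating a complex projection by a unitary or antiunitary operator again gives a complex
  projection.\<close>

lemma complex_structureD:
  assumes "complex_structure J"
  shows "linear J" "J (J x) = - x" "inner (J x) (J y) = inner x y"
  using assms unfolding complex_structure_def by auto

lemma complex_structure_skew:
  assumes "complex_structure J"
  shows "inner (J x) y = - inner x (J y)"
  using complex_structureD[OF assms] by (metis inner_minus_left)

lemma bounded_linear_complex_structure:
  assumes "complex_structure J"
  shows "bounded_linear J"
proof (rule bounded_linear_intro[where K = 1])
  show "norm (J x) \<le> norm x * 1" for x
    using complex_structureD(3)[OF assms, of x x] by (simp add: norm_eq_sqrt_inner)
qed (use complex_structureD(1)[OF assms] in \<open>auto simp: linear_add linear_scale\<close>)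

lemma cscale_ii: "cscale J \<i> x = J x"
  by (simp add: cscale_def)

lemma is_cproj_commute: "is_cproj J P \<Longrightarrow> P (J x) = J (P x)"
  unfolding is_cproj_def by (metis cscale_ii)

lemma is_cproj_range_invariant:
  assumes "is_cproj J P"
  shows "J ` range P \<subseteq> range P"
proof
  fix y
  assume "y \<in> J ` range P"
  then obtain x where "y = P (J x)"
    using is_cproj_commute[OF assms] by auto
  then show "y \<in> range P"
    by simp
qed

lemma is_cproj_imp_is_rproj:
  assumes "is_cproj J P"
  shows "is_rproj P"
proof -
  have "inner (P x) y = inner x (P y)" for x y
    using arg_cong[of "cinner J (P x) y" "cinner J x (P y)" Re] assms
    unfolding is_cproj_def cinner_def by simp
  then show ?thesis
    using assms unfolding is_cproj_def is_rproj_def by blast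
qed

lemma is_rproj_commute_if_invariant:
  assumes J: "complex_structure J" and E: "is_rproj E" and inv: "J ` range E \<subseteq> range E"
  shows "E (J x) = J (E x)"
proof -
  have sa: "inner (E u) v = inner u (E v)" for u v
    using E unfolding is_rproj_def by blast
  have fix_J: "E (J (E u)) = J (E u)" for u
  proof -
    obtain w where "J (E u) = E w"
      using inv by blast
    then show ?thesis
      using E unfolding is_rproj_def by simp
  qed
  have "inner (E (J x)) y = inner (J (E x)) y" for y
  proof -
    have "inner (E (J x)) y = - inner x (J (E y))"
      by (simp add: sa complex_structure_skew[OF J])
    also have "\<dots> = - inner (E x) (J (E y))"
      using sa[of x "J (E y)"] fix_J[of y] by simp
    also have "\<dots> = inner (J (E x)) y"
      using complex_structure_skew[OF J, of "E x" "E y"] sa[of "J (E x)" y] fix_J[of x] by simp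
    finally show ?thesis .
  qed
  then show ?thesis
    using vector_eq_rdot[of "E (J x)" "J (E x)"] by simp
qed

lemma is_rproj_imp_is_cproj:
  assumes J: "complex_structure J" and E: "is_rproj E" and inv: "J ` range E \<subseteq> range E"
  shows "is_cproj J E"
proof -
  have lin: "linear E" and sa: "\<And>x y. inner (E x) y = inner x (E y)"
    using E unfolding is_rproj_def by auto
  note comm = is_rproj_commute_if_invariant[OF assms]
  have "E (cscale J c x) = cscale J c (E x)" for c x
    unfolding cscale_def using lin comm by (simp add: linear_add linear_scale)
  moreover have "cinner J (E x) y = cinner J x (E y)" for x y
    unfolding cinner_def using sa[of x y] sa[of x "J y"] comm[of y] by simp
  ultimately show ?thesis
    using E unfolding is_cproj_def is_rproj_def by blast
qed

lemma cproj_onto_eq_rproj_onto: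
  assumes "complex_structure J" "J ` M \<subseteq> M"
  shows "cproj_onto J M = rproj_onto M"
proof -
  have "is_cproj J E \<and> range E = M \<longleftrightarrow> is_rproj E \<and> range E = M" for E
    using assms is_cproj_imp_is_rproj is_rproj_imp_is_cproj by blast
  then show ?thesis
    unfolding cproj_onto_def rproj_onto_def by simp
qed

lemma invariant_closure_span:
  assumes J: "complex_structure J" and S: "J ` S \<subseteq> S"
  shows "J ` closure (span S) \<subseteq> closure (span S)"
proof (rule image_closure_subset)
  show "continuous_on (closure (span S)) J"
    using bounded_linear_complex_structure[OF J] linear_continuous_on by blast
  have "J ` span S = span (J ` S)"
    using span_linear_image[OF complex_structureD(1)[OF J]] by simp
  also have "\<dots> \<subseteq> span S"
    using S by (simp add: span_mono)
  finally show "J ` span S \<subseteq> closure (span S)"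
    using closure_subset by blast
qed simp

lemma cSup_eq_rSup:
  assumes J: "complex_structure J" and "\<forall>P\<in>\<P>. is_cproj J P"
  shows "cSup J \<P> = rSup \<P>"
proof -
  let ?S = "\<Union>P\<in>\<P>. range P"
  have inv: "J ` ?S \<subseteq> ?S"
    using assms(2) is_cproj_range_invariant by blast
  then have "cspan J ?S = span ?S"
    unfolding cspan_def by (simp add: Un_absorb2)
  then show ?thesis
    unfolding cSup_def rSup_def
    using cproj_onto_eq_rproj_onto[OF J invariant_closure_span[OF J inv]] by simp
qed

lemma cjoin_eq_rjoin:
  assumes "complex_structure J" "is_cproj J P" "is_cproj J Q"
  shows "cjoin J P Q = rjoin P Q"
  unfolding cjoin_def rjoin_def using cSup_eq_rSup[OF assms(1)] assms(2,3) by simp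

lemma cmeet_eq_rmeet:
  assumes J: "complex_structure J" and "is_cproj J P" "is_cproj J Q"
  shows "cmeet J P Q = rmeet P Q"
proof -
  have "J ` (range P \<inter> range Q) \<subseteq> range P \<inter> range Q"
    using assms(2,3) is_cproj_range_invariant by blast
  then show ?thesis
    unfolding cmeet_def rmeet_def using cproj_onto_eq_rproj_onto[OF J] by simp
qed

lemma cperp_eq_rinv:
  assumes "complex_structure J" "is_cproj J P"
  shows "cperp P = rinv J P"
  unfolding cperp_def rinv_def
  using is_cproj_commute[OF assms(2)] complex_structureD(2)[OF assms(1)] by simp

lemma inj_if_preserves_inner:
  assumes "linear U" "\<And>x y. inner (U x) (U y) = inner x y"
  shows "inj U"
proof (rule injI)
  fix x y
  assume "U x = U y"
  then have "U (x - y) = 0"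
    using assms(1) by (simp add: linear_diff)
  then show "x = y"
    using assms(2)[of "x - y" "x - y"] by simp
qed

lemma is_cproj_conjugate:
  assumes surj: "surj U" and lin: "linear U"
    and scale: "\<And>c x. U (cscale J c x) = cscale J (\<sigma> c) (U x)"
    and isom: "\<And>x y. cinner J (U x) (U y) = \<sigma> (cinner J x y)"
    and \<sigma>: "\<And>c. \<sigma> (\<sigma> c) = c" "\<And>c. Re (\<sigma> c) = Re c"
    and P: "is_cproj J P"
  shows "is_cproj J (U \<circ> P \<circ> inv U)"
proof -
  have "inner (U x) (U y) = inner x y" for x y
    using arg_cong[OF isom, of Re] \<sigma>(2) by (simp add: cinner_def)
  then have "inj U"
    using inj_if_preserves_inner lin by blast
  define V where "V = inv U"
  have UV: "U (V y) = y" for y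
    unfolding V_def using surj by (simp add: surj_f_inv_f)
  have VU: "V (U x) = x" for x
    unfolding V_def using \<open>inj U\<close> by simp
  have "linear V"
  proof (rule linearI)
    show "V (a + b) = V a + V b" for a b
      using VU[of "V a + V b"] by (simp add: linear_add[OF lin] UV)
    show "V (r *\<^sub>R a) = r *\<^sub>R V a" for r a
      using VU[of "r *\<^sub>R V a"] by (simp add: linear_scale[OF lin] UV)
  qed
  have scale_V: "V (cscale J c y) = cscale J (\<sigma> c) (V y)" for c y
    by (metis UV VU scale \<sigma>(1))
  have linP: "linear P" and scale_P: "\<And>c x. P (cscale J c x) = cscale J c (P x)"
    and sa_P: "\<And>x y. cinner J (P x) y = cinner J x (P y)" and idem_P: "\<And>x. P (P x) = P x"
    using P unfolding is_cproj_def by auto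
  have "cinner J (U (P (V x))) y = cinner J x (U (P (V y)))" for x y
  proof -
    have "cinner J (U (P (V x))) y = \<sigma> (cinner J (P (V x)) (V y))"
      by (metis UV isom)
    also have "\<dots> = \<sigma> (cinner J (V x) (P (V y)))"
      by (simp add: sa_P)
    also have "\<dots> = cinner J x (U (P (V y)))"
      by (metis UV isom)
    finally show ?thesis .
  qed
  moreover have "linear (U \<circ> P \<circ> V)"
    using lin linP \<open>linear V\<close> by (simp add: linear_compose)
  ultimately show ?thesis
    unfolding is_cproj_def V_def[symmetric] by (simp add: scale_V scale_P scale \<sigma>(1) VU idem_P)
qed

lemma is_cproj_cact:
  assumes "U \<in> AU J" "is_cproj J P"
  shows "is_cproj J (cact U P)"
  using assms(1) unfolding AU_def cact_def
proof (elim CollectE disjE)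
  assume "unitary J U"
  then show "is_cproj J (U \<circ> P \<circ> inv U)"
    unfolding unitary_def by (intro is_cproj_conjugate[where \<sigma> = "\<lambda>c. c"] assms(2)) auto
next
  assume "antiunitary J U"
  then show "is_cproj J (U \<circ> P \<circ> inv U)"
    unfolding antiunitary_def by (intro is_cproj_conjugate[where \<sigma> = cnj] assms(2)) auto
qed

theorem lemma2p10:
  fixes J :: "'a::{real_inner, complete_space} \<Rightarrow> 'a"
  assumes "complex_structure J"
  shows "(\<forall>P. is_cproj J P \<longrightarrow> is_rproj (incl P))
    \<and> inj_on incl {P. is_cproj J P}
    \<and> incl (\<lambda>x::'a. 0) = (\<lambda>x. 0) \<and> incl (id::'a \<Rightarrow> 'a) = id
    \<and> (\<forall>P. is_cproj J P \<longrightarrow> incl (cperp P) = rinv J (incl P))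
    \<and> (\<forall>P Q. is_cproj J P \<and> is_cproj J Q \<longrightarrow>
          incl (cjoin J P Q) = rjoin (incl P) (incl Q)
        \<and> incl (cmeet J P Q) = rmeet (incl P) (incl Q))
    \<and> (\<forall>\<P>. (\<forall>P\<in>\<P>. is_cproj J P) \<and> (\<forall>P\<in>\<P>. \<forall>Q\<in>\<P>. P \<noteq> Q \<longrightarrow> cle J P (cperp Q)) \<longrightarrow>
          incl (cSup J \<P>) = rSup (incl ` \<P>))
    \<and> (\<forall>U\<in>AU J. \<forall>P. is_cproj J P \<longrightarrow>
          is_cproj J (cact U P) \<and> incl (cact U P) = ract U (incl P))"
proof -
  have incl_id: "incl = id"
    by (simp add: incl_def fun_eq_iff)
  show ?thesis
    using is_cproj_imp_is_rproj cperp_eq_rinv[OF assms]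
      cjoin_eq_rjoin[OF assms] cmeet_eq_rmeet[OF assms]
      cSup_eq_rSup[OF assms] is_cproj_cact
    by (simp add: incl_id ract_def cact_def[symmetric]) blast
qed

end
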